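(* For all $z$ with $0<|z|\le 1$, \[ \sum_{k=1}^\infty\frac{(-1)^{k-1}\zeta(2k)z^{2k}}{(2k+1)(k+1)} = -\frac12-\frac{\pi z}{6}-\frac{\pi}{12z}-\frac{\zeta(3)}{2\pi^2z^2}+\frac{\operatorname{Li}_3(e^{2\pi z})}{2\pi^2z^2}-\frac{\operatorname{Li}_2(e^{2\pi z})}{2\pi z}. \]
   Context: $\zeta$ is the Riemann zeta function. $\operatorname{Li}_s(x)=\sum_{k\ge1}x^k/k^s$ is the polylogarithm (analytically continued to the complex plane). *)

theory Defs
  imports "HOL-Complex_Analysis.Complex_Analysis"
begin

text \<open>This agrees with the
  Riemann zeta function on the half-plane Re s > 1, which contains every
  argument used in the statement (the even integers 2k with k \<ge> 1, and 3).\<close>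
definition zeta :: "complex \<Rightarrow> complex" where
  "zeta s = (\<Sum>n. 1 / (of_nat (Suc n)) powr s)"

text \<open>Polylogarithm Li_n for integer order n \<ge> 1, principal branch
  (analytic continuation of the power series to the plane cut along [1,\<infinity>)):
  Li_1(w) = -Ln(1-w), and Li_(n+1)(w) = integral of Li_n(t)/t along the segment
  from 0 to w. On the unit disc this equals the series sum of w^k/k^n.\<close>
fun polylog :: "nat \<Rightarrow> complex \<Rightarrow> complex" where
  "polylog 0 w = w / (1 - w)"
| "polylog (Suc 0) w = - Ln (1 - w)"
| "polylog (Suc (Suc n)) w =
     contour_integral (linepath 0 w) (\<lambda>t. polylog (Suc n) t / t)"

end

theory Submission
  imports Defs "HOL-Real_Asymp.Real_Asymp"
begin

(* Let G z and H z be z^2 times the left- and the right-hand side. Both solve f'' = K with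
   K z = pi z coth (pi z) - 1 and have f(z), f'(z) -> 0 as z -> 0, which forces G = H.

   G is a power series. Its second derivative is i z (Digamma (1 - i z) - Digamma (1 + i z)),
   by the Taylor series of Digamma at 1 whose coefficients are zeta values; the reflection and
   recurrence formulas of Digamma turn this into K z.

   For H, the rule Li_(n+1)'(w) = Li_n(w) / w and the chain rule give H'' = K wherever
   e^(2 pi z) avoids the cut [1, oo) of the polylogarithm, i.e. on the unit disc minus [0, 1).
   For real z > 0 the point e^(2 pi z) lies on the cut; there the same computation is done with
   real derivatives of the integral representation of Li_n along the real axis. H and H' vanish
   at 0 because Li_2(1) = pi^2/6 and Li_3(1) = zeta(3), which follows from the continuity of
   Li_n, n >= 2, on the closed unit disc (Abel's theorem for its power series).

   So G = H on the punctured open disc, and on the unit circle by radial continuity. *)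

section \<open>The polylogarithm on the slit plane\<close>

definition slit_plane :: "complex set" where
  "slit_plane = - {w. Im w = 0 \<and> 1 \<le> Re w}"

lemma open_slit_plane: "open slit_plane"
proof -
  have "closed {w::complex. Im w = 0 \<and> 1 \<le> Re w}"
    by (intro closed_Collect_conj closed_Collect_eq closed_Collect_le continuous_intros)
  thus ?thesis unfolding slit_plane_def by (simp add: open_Compl)
qed

lemma zero_in_slit_plane [simp]: "0 \<in> slit_plane"
  by (simp add: slit_plane_def)

lemma one_notin_slit_plane [simp]: "1 \<notin> slit_plane"
  by (simp add: slit_plane_def)

lemma one_minus_notin_nonpos_Reals: "w \<in> slit_plane \<Longrightarrow> 1 - w \<notin> \<real>\<^sub>\<le>\<^sub>0"
  by (auto simp: slit_plane_def complex_nonpos_Reals_iff)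

lemma closed_segment_0_subset_slit_plane:
  assumes "w \<in> slit_plane"
  shows "closed_segment 0 w \<subseteq> slit_plane"
proof
  fix u assume "u \<in> closed_segment 0 w"
  then obtain t where t: "0 \<le> t" "t \<le> 1" "u = of_real t * w"
    by (auto simp: closed_segment_def scaleR_conv_of_real)
  show "u \<in> slit_plane"
  proof (rule ccontr)
    assume "u \<notin> slit_plane"
    hence u: "t * Im w = 0" "1 \<le> t * Re w" using t(3) by (auto simp: slit_plane_def)
    hence "0 < t" using t(1) by (cases "t = 0") auto
    hence "Im w = 0" using u(1) by simp
    moreover have "0 \<le> Re w" using u(2) t(1) by (smt (verit) mult_nonneg_nonpos)
    hence "t * Re w \<le> Re w" using t(1,2) by (simp add: mult_left_le_one_le)
    ultimately show False using u(2) assms by (simp add: slit_plane_def)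
  qed
qed

lemma cball_minus_1_subset_slit_plane: "cball 0 1 - {1} \<subseteq> slit_plane"
proof
  fix w :: complex assume w: "w \<in> cball 0 1 - {1}"
  show "w \<in> slit_plane"
  proof (rule ccontr)
    assume "w \<notin> slit_plane"
    hence "Im w = 0" "1 \<le> Re w" by (auto simp: slit_plane_def)
    moreover have "Re w \<le> 1" using w complex_Re_le_cmod[of w] by simp
    ultimately have "w = 1" by (simp add: complex_eq_iff)
    thus False using w by simp
  qed
qed

lemma contour_integral_linepath_cong_start:
  assumes "\<And>t. t \<noteq> a \<Longrightarrow> f t = g t"
  shows "contour_integral (linepath a b) f = contour_integral (linepath a b) g"
proof (cases "b = a")
  case False
  have "linepath a b t \<noteq> a" if "t \<noteq> 0" for t
    using False that by (simp add: linepath_def algebra_simps)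
  hence "(f has_contour_integral i) (linepath a b) \<longleftrightarrow> (g has_contour_integral i) (linepath a b)" for i
    unfolding has_contour_integral_linepath
    by (intro has_integral_spike_finite_eq[of "{0}"]) (auto simp: assms)
  thus ?thesis unfolding contour_integral_def contour_integrable_on_def by simp
qed simp

lemma has_field_derivative_contour_integral_linepath:
  assumes holf: "f holomorphic_on S" and S: "a \<in> S" "open S"
      and star: "\<And>y. y \<in> S \<Longrightarrow> closed_segment a y \<subseteq> S" and x: "x \<in> S"
  shows "((\<lambda>x. contour_integral (linepath a x) f) has_field_derivative f x) (at x)"
proof (rule triangle_contour_integrals_starlike_primitive[OF _ S x star])
  show "continuous_on S f" using holf by (rule holomorphic_on_imp_continuous_on)
  fix b c assume "closed_segment b c \<subseteq> S"
  hence "convex hull {a, b, c} \<subseteq> S"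
    by (intro starlike_convex_subset[OF S(1) _ star])
  hence "(f has_contour_integral 0) (linepath a b +++ linepath b c +++ linepath c a)"
    by (intro Cauchy_theorem_triangle holomorphic_on_subset[OF holf])
  thus "contour_integral (linepath a b) f + contour_integral (linepath b c) f
          + contour_integral (linepath c a) f = 0"
    using has_chain_integral_chain_integral3 by blast
qed

lemma holomorphic_on_divide_by_id:
  assumes f: "\<And>x. x \<in> S \<Longrightarrow> (f has_field_derivative f' x) (at x)"
      and S: "open S" "0 \<in> S" and f0: "f 0 = 0"
  shows "(\<lambda>w. if w = 0 then f' 0 else f w / w) holomorphic_on S"
proof -
  have "f holomorphic_on S"
    using f S(1) by (meson field_differentiable_at_within field_differentiable_def holomorphic_on_def)
  hence "(\<lambda>w. if w = 0 then deriv f 0 else (f w - f 0) / (w - 0)) holomorphic_on S"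
    using S by (intro pole_lemma) (simp_all add: interior_open)
  moreover have "deriv f 0 = f' 0" using f[OF S(2)] by (rule DERIV_imp_deriv)
  ultimately show ?thesis using f0 by (simp cong: if_cong)
qed

lemma polylog_Suc_0 [simp]: "polylog (Suc n) 0 = 0"
  by (cases n) simp_all

lemma has_field_derivative_polylog:
  assumes "x \<in> slit_plane"
  shows "(polylog (Suc n) has_field_derivative (if x = 0 then 1 else polylog n x / x)) (at x)"
  using assms
proof (induction n arbitrary: x)
  case 0
  have "x \<noteq> 1" using 0 by auto
  have "((\<lambda>w. - Ln (1 - w)) has_field_derivative - (inverse (1 - x) * (-1))) (at x)"
    by (intro derivative_eq_intros has_field_derivative_Ln one_minus_notin_nonpos_Reals 0) auto
  moreover have "- (inverse (1 - x) * (-1)) = (if x = 0 then 1 else polylog 0 x / x)"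
    using \<open>x \<noteq> 1\<close> by (auto simp: field_simps)
  ultimately show ?case by (simp add: fun_eq_iff)
next
  case (Suc n)
  let ?F = "\<lambda>w. if w = 0 then 1 else polylog (Suc n) w / w"
  have "?F holomorphic_on slit_plane"
    using holomorphic_on_divide_by_id[OF Suc.IH open_slit_plane zero_in_slit_plane] by (simp cong: if_cong)
  hence "((\<lambda>x. contour_integral (linepath 0 x) ?F) has_field_derivative ?F x) (at x)"
    by (rule has_field_derivative_contour_integral_linepath)
       (use Suc.prems closed_segment_0_subset_slit_plane open_slit_plane in auto)
  moreover have "polylog (Suc (Suc n)) = (\<lambda>x. contour_integral (linepath 0 x) ?F)"
    by (auto simp: fun_eq_iff intro!: contour_integral_linepath_cong_start)
  ultimately show ?case by simp
qed

lemma has_field_derivative_polylog_nonzero: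
  "x \<in> slit_plane \<Longrightarrow> x \<noteq> 0 \<Longrightarrow> (polylog (Suc n) has_field_derivative polylog n x / x) (at x)"
  using has_field_derivative_polylog[of x n] by simp

lemma holomorphic_on_polylog_divide:
  "(\<lambda>w. if w = 0 then 1 else polylog (Suc n) w / w) holomorphic_on slit_plane"
  using holomorphic_on_divide_by_id[OF has_field_derivative_polylog open_slit_plane]
  by (simp cong: if_cong)

lemma isCont_polylog: "w \<in> slit_plane \<Longrightarrow> isCont (polylog (Suc n)) w"
  using has_field_derivative_polylog DERIV_isCont by blast

declare polylog.simps(3) [simp del]

section \<open>The power series of the polylogarithm\<close>

definition polylog_coeff :: "nat \<Rightarrow> nat \<Rightarrow> complex" where
  "polylog_coeff n m = (if m = 0 then 0 else 1 / of_nat m ^ n)"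

definition polylog_series :: "nat \<Rightarrow> complex \<Rightarrow> complex" where
  "polylog_series n w = (\<Sum>m. polylog_coeff n m * w ^ m)"

lemma norm_polylog_coeff_le_1: "norm (polylog_coeff n m) \<le> 1"
proof (cases "m = 0")
  case False
  hence "(1::real) \<le> real m ^ n" by (simp add: one_le_power)
  thus ?thesis by (simp add: polylog_coeff_def norm_divide norm_power)
qed (simp add: polylog_coeff_def)

lemma summable_polylog_series:
  assumes "norm w < 1"
  shows "summable (\<lambda>m. polylog_coeff n m * w ^ m)"
proof (rule summable_comparison_test')
  show "summable (\<lambda>m. norm w ^ m)" using assms by (simp add: summable_geometric)
  show "norm (polylog_coeff n m * w ^ m) \<le> norm w ^ m" for m
    using norm_polylog_coeff_le_1[of n m]
    by (simp add: norm_mult norm_power mult_left_le_one_le)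
qed

lemma norm_polylog_series_term_le:
  assumes "norm w \<le> 1" "2 \<le> n"
  shows "norm (polylog_coeff n m * w ^ m) \<le> inverse (real m ^ 2)"
proof (cases "m = 0")
  case False
  have "norm (polylog_coeff n m * w ^ m) \<le> norm (polylog_coeff n m)"
    using assms(1) by (simp add: norm_mult norm_power power_le_one mult_left_le)
  also have "norm (polylog_coeff n m) = inverse (real m ^ n)"
    using False by (simp add: polylog_coeff_def norm_divide norm_power field_simps)
  also have "inverse (real m ^ n) \<le> inverse (real m ^ 2)"
    using False assms(2) by (intro le_imp_inverse_le power_increasing) auto
  finally show ?thesis .
qed (simp add: polylog_coeff_def)

lemma diffs_polylog_coeff: "diffs (polylog_coeff (Suc n)) m = 1 / of_nat (Suc m) ^ n"
  by (simp add: diffs_def polylog_coeff_def field_simps del: of_nat_Suc)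

lemma polylog_series_0 [simp]: "polylog_series n 0 = 0"
  by (simp add: polylog_series_def polylog_coeff_def)

lemma has_field_derivative_polylog_series:
  assumes "norm w < 1"
  shows "(polylog_series (Suc n) has_field_derivative
           (if w = 0 then 1 else polylog_series n w / w)) (at w)"
proof -
  let ?d = "\<lambda>m. diffs (polylog_coeff (Suc n)) m * w ^ m"
  have "(polylog_series (Suc n) has_field_derivative suminf ?d) (at w)"
    unfolding polylog_series_def[abs_def]
    by (rule termdiffs_strong'[of 1]) (use assms summable_polylog_series in auto)
  moreover have "suminf ?d = (if w = 0 then 1 else polylog_series n w / w)"
  proof (cases "w = 0")
    case True thus ?thesis by (simp only: True powser_zero) (simp add: diffs_polylog_coeff)
  next
    case False
    have "(\<lambda>m. polylog_coeff n m * w ^ m) sums polylog_series n w"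
      unfolding polylog_series_def using summable_polylog_series[OF assms] by (simp add: summable_sums)
    hence "(\<lambda>m. polylog_coeff n (Suc m) * w ^ Suc m) sums polylog_series n w"
      by (subst sums_Suc_iff) (simp add: polylog_coeff_def)
    moreover have "(\<lambda>m. polylog_coeff n (Suc m) * w ^ Suc m) = (\<lambda>m. w * ?d m)"
      by (simp add: fun_eq_iff diffs_polylog_coeff polylog_coeff_def field_simps del: of_nat_Suc)
    ultimately have "(\<lambda>m. w * ?d m) sums polylog_series n w" by (simp only:)
    hence "?d sums (polylog_series n w / w)"
      using sums_divide[of "\<lambda>m. w * ?d m" _ w] False by simp
    thus ?thesis using False by (simp add: sums_iff)
  qed
  ultimately show ?thesis by simp
qed

lemma polylog_eq_polylog_series:
  assumes "norm w < 1"
  shows "polylog (Suc n) w = polylog_series (Suc n) w"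
  using assms
proof (induction n arbitrary: w)
  case 0
  have "(\<lambda>m. - ((- (- w)) ^ m) / of_nat m) sums ln (1 + - w)"
    by (rule Ln_series') (use 0 in simp)
  hence "(\<lambda>m. - (- ((- (- w)) ^ m) / of_nat m)) sums - ln (1 + - w)"
    by (rule sums_minus)
  moreover have "(\<lambda>m. - (- ((- (- w)) ^ m) / of_nat m)) = (\<lambda>m. polylog_coeff 1 m * w ^ m)"
    by (auto simp: polylog_coeff_def fun_eq_iff)
  ultimately have "(\<lambda>m. polylog_coeff 1 m * w ^ m) sums (- Ln (1 - w))" by simp
  thus ?case by (simp add: polylog_series_def sums_iff)
next
  case (Suc n)
  define f where "f = (\<lambda>w. polylog (Suc (Suc n)) w - polylog_series (Suc (Suc n)) w)"
  have "\<exists>c. \<forall>x\<in>ball 0 1. f x = c"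
  proof (rule has_field_derivative_zero_constant)
    fix x :: complex assume x: "x \<in> ball 0 1"
    hence "x \<in> slit_plane" using cball_minus_1_subset_slit_plane by auto
    hence "(f has_field_derivative (if x = 0 then 1 else polylog (Suc n) x / x)
              - (if x = 0 then 1 else polylog_series (Suc n) x / x)) (at x)"
      unfolding f_def using x
      by (intro DERIV_diff has_field_derivative_polylog has_field_derivative_polylog_series) auto
    hence "(f has_field_derivative 0) (at x)"
      using Suc.IH[of x] x by (simp cong: if_cong)
    thus "(f has_field_derivative 0) (at x within ball 0 1)"
      by (rule has_field_derivative_at_within)
  qed simp
  moreover have "f 0 = 0" by (simp add: f_def)
  ultimately have "f w = 0" using Suc.prems by fastforce
  thus ?case unfolding f_def by simp
qed

lemma continuous_on_polylog_series:
  assumes "2 \<le> n"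
  shows "continuous_on (cball 0 1) (polylog_series n)"
proof -
  have "uniform_limit (cball 0 1) (\<lambda>N w. \<Sum>m<N. polylog_coeff n m * w ^ m) (polylog_series n) sequentially"
    unfolding polylog_series_def[abs_def]
    by (rule Weierstrass_m_test[OF _ inverse_power_summable[of 2]])
       (use norm_polylog_series_term_le assms in auto)
  thus ?thesis
    by (rule uniform_limit_theorem[rotated]) (auto intro!: always_eventually continuous_intros)
qed

lemma zeta_of_nat_eq_suminf: "zeta (of_nat m) = (\<Sum>k. 1 / of_nat (Suc k) ^ m)"
  unfolding zeta_def by (simp add: powr_nat' del: of_nat_Suc)

lemma sums_polylog_series_1:
  assumes "2 \<le> m"
  shows "(\<lambda>k. 1 / of_nat (Suc k) ^ m) sums polylog_series m 1"
proof -
  have "summable (\<lambda>k. polylog_coeff m k * 1 ^ k)"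
    by (rule summable_comparison_test'[OF inverse_power_summable[of 2]])
       (use norm_polylog_series_term_le[OF _ assms, of 1] in auto)
  hence "polylog_coeff m sums polylog_series m 1"
    by (simp add: polylog_series_def summable_sums)
  hence "(\<lambda>k. polylog_coeff m (Suc k)) sums polylog_series m 1"
    by (subst sums_Suc_iff) (simp add: polylog_coeff_def)
  thus ?thesis by (simp add: polylog_coeff_def del: of_nat_Suc)
qed

lemma zeta_of_nat_eq_polylog_series:
  "2 \<le> m \<Longrightarrow> zeta (of_nat m) = polylog_series m 1"
  using sums_polylog_series_1 zeta_of_nat_eq_suminf by (simp add: sums_iff)

lemma sums_zeta_of_nat: "2 \<le> m \<Longrightarrow> (\<lambda>k. 1 / of_nat (Suc k) ^ m) sums zeta (of_nat m)"
  using sums_polylog_series_1 zeta_of_nat_eq_polylog_series by simp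

lemma zeta_2: "zeta 2 = of_real (pi ^ 2 / 6)"
proof -
  have "of_real (1 / (1 + real k) ^ 2) = (1 / of_nat (Suc k) ^ 2 :: complex)" for k
    by (simp only: of_real_divide of_real_power of_real_add of_real_1 of_real_of_nat_eq of_nat_Suc)
  moreover have "(\<lambda>k. of_real (1 / (1 + real k) ^ 2) :: complex) sums of_real (pi ^ 2 / 6)"
    using sums_of_real[OF inverse_squares_sums, where 'a=complex] by (simp add: add.commute)
  ultimately have "(\<lambda>k. 1 / of_nat (Suc k) ^ 2 :: complex) sums of_real (pi ^ 2 / 6)"
    by simp
  with sums_zeta_of_nat[of 2] show ?thesis using sums_unique2 by force
qed

lemma norm_zeta_of_nat_le:
  assumes "2 \<le> m"
  shows "norm (zeta (of_nat m)) \<le> pi ^ 2 / 6"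
proof -
  have le: "norm (1 / of_nat (Suc k) ^ m :: complex) \<le> 1 / (1 + real k) ^ 2" for k
  proof -
    have "norm (1 / of_nat (Suc k) ^ m :: complex) = 1 / (1 + real k) ^ m"
      by (simp only: norm_divide norm_power norm_one norm_of_nat) simp
    also have "\<dots> \<le> 1 / (1 + real k) ^ 2"
      using assms by (intro divide_left_mono power_increasing) auto
    finally show ?thesis .
  qed
  have sq: "(\<lambda>k. 1 / (1 + real k) ^ 2) sums (pi ^ 2 / 6)"
    using inverse_squares_sums by simp
  have sm: "summable (\<lambda>k. norm (1 / of_nat (Suc k) ^ m :: complex))"
    by (rule summable_comparison_test'[OF sums_summable[OF sq]]) (use le in auto)
  have "norm (zeta (of_nat m)) \<le> (\<Sum>k. norm (1 / of_nat (Suc k) ^ m :: complex))"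
    unfolding zeta_of_nat_eq_suminf by (rule summable_norm[OF sm])
  also have "\<dots> \<le> pi ^ 2 / 6"
    using suminf_le[OF le sm sums_summable[OF sq]] sq by (simp add: sums_iff)
  finally show ?thesis .
qed

section \<open>The polylogarithm along the real axis\<close>

lemma polylog_of_real_eq_integral:
  assumes "0 \<le> y"
  shows "polylog (Suc (Suc n)) (of_real y) =
           integral {0..y} (\<lambda>t. polylog (Suc n) (of_real t) / of_real t)"
proof (cases "y = 0")
  case False
  hence "polylog (Suc (Suc n)) (of_real y) =
           integral {Re 0..Re (of_real y)} (\<lambda>t. polylog (Suc n) (of_real t) / of_real t)"
    unfolding polylog.simps(3) using assms by (intro contour_integral_linepath_Reals_eq) auto
  thus ?thesis by simp
qed simp

lemma Ln_one_minus_of_real_lt_1: "t < 1 \<Longrightarrow> Ln (1 - of_real t) = of_real (ln (1 - t))"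
  using Ln_of_real[of "1 - t"] by simp

lemma Ln_one_minus_of_real_gt_1:
  "1 < t \<Longrightarrow> Ln (1 - of_real t) = of_real (ln (t - 1)) + of_real pi * \<i>"
  using Ln_of_real'[of "1 - t"] by simp

lemma integrable_on_ln_one_minus: "(\<lambda>t::real. ln (1 - t)) integrable_on {0..1}"
proof -
  define B where "B = (\<lambda>t::real. - (1 - t) * ln (1 - t) - t)"
  have "((\<lambda>t. ln (1 - t)) has_integral (B 1 - B 0)) {0..1}"
  proof (rule fundamental_theorem_of_calculus_interior)
    show "continuous_on {0..1} B"
    proof (rule continuous_on_IccI)
      show "(B \<longlongrightarrow> B 0) (at_right 0)" "(B \<longlongrightarrow> B 1) (at_left 1)"
        unfolding B_def by real_asymp+
      show "(B \<longlongrightarrow> B x) (at x)" if "0 < x" "x < 1" for x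
        using that unfolding B_def by (intro tendsto_intros) auto
    qed simp
    show "(B has_vector_derivative ln (1 - x)) (at x)" if "x \<in> {0<..<1}" for x
      unfolding B_def has_real_derivative_iff_has_vector_derivative[symmetric] using that
      by (auto intro!: derivative_eq_intros simp: divide_simps)
  qed simp
  thus ?thesis by blast
qed

lemma integrable_on_ln_minus_one:
  assumes "1 < Y"
  shows "(\<lambda>t::real. ln (t - 1)) integrable_on {1..Y}"
proof -
  define B where "B = (\<lambda>t::real. (t - 1) * ln (t - 1) - t)"
  have "((\<lambda>t. ln (t - 1)) has_integral (B Y - B 1)) {1..Y}"
  proof (rule fundamental_theorem_of_calculus_interior)
    show "continuous_on {1..Y} B"
    proof (rule continuous_on_IccI)
      show "(B \<longlongrightarrow> B 1) (at_right 1)" unfolding B_def by real_asymp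
      show "(B \<longlongrightarrow> B x) (at x)" if "1 < x" for x
        using that unfolding B_def by (intro tendsto_intros) auto
      thus "(B \<longlongrightarrow> B Y) (at_left Y)" using assms by (simp add: filterlim_at_split)
    qed (use assms in simp)
    show "(B has_vector_derivative ln (x - 1)) (at x)" if "x \<in> {1<..<Y}" for x
      unfolding B_def has_real_derivative_iff_has_vector_derivative[symmetric] using that
      by (auto intro!: derivative_eq_intros simp: divide_simps)
  qed (use assms in simp)
  thus ?thesis by blast
qed

lemma minus_ln_one_minus_divide_le:
  assumes "0 < t" "t < (1::real)"
  shows "- ln (1 - t) / t \<le> 2 - 2 * ln (1 - t)"
proof (cases "t \<ge> 1/2")
  case True
  have "- ln (1 - t) / t \<le> - ln (1 - t) / (1/2)"
    using True assms by (intro divide_left_mono) auto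
  thus ?thesis using assms by simp
next
  case False
  have "- ln (1 - t) = ln (1 / (1 - t))" using assms by (simp add: ln_div)
  also have "\<dots> \<le> 1 / (1 - t) - 1" using assms by (intro ln_le_minus_one) simp
  also have "\<dots> \<le> 2 * t" using False assms by (simp add: field_simps)
  finally have "- ln (1 - t) / t \<le> 2" using assms by (simp add: field_simps)
  moreover have "ln (1 - t) \<le> 0" using assms by simp
  ultimately show ?thesis by linarith
qed

lemma integrable_on_polylog_1_divide_of_real_01:
  "(\<lambda>t. polylog 1 (of_real t) / of_real t) integrable_on {0..1}"
proof -
  have "(\<lambda>t. polylog 1 (of_real t) / of_real t) integrable_on {0<..<1}"
  proof (rule measurable_bounded_by_integrable_imp_integrable)
    have "continuous_on {0<..<1} (\<lambda>t. complex_of_real (- ln (1 - t)) / of_real t)"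
      by (auto intro!: continuous_intros)
    hence "continuous_on {0<..<1} (\<lambda>t. polylog 1 (of_real t) / of_real t)"
      by (rule continuous_on_cong[THEN iffD1, rotated 2])
         (auto simp: Ln_one_minus_of_real_lt_1)
    thus "(\<lambda>t. polylog 1 (of_real t) / of_real t) \<in> borel_measurable (lebesgue_on {0<..<1})"
      by (rule continuous_imp_measurable_on_sets_lebesgue) simp
    have "(\<lambda>t::real. 2 - 2 * ln (1 - t)) integrable_on {0..1}"
      using integrable_on_ln_one_minus by (intro integrable_diff integrable_cmul) auto
    thus "(\<lambda>t::real. 2 - 2 * ln (1 - t)) integrable_on {0<..<1}"
      by (simp add: integrable_on_Icc_iff_Ioo)
    fix t :: real assume t: "t \<in> {0<..<1}"
    hence "norm (polylog 1 (of_real t) / of_real t) = - ln (1 - t) / t"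
      by (simp add: Ln_one_minus_of_real_lt_1 norm_divide)
    also have "\<dots> \<le> 2 - 2 * ln (1 - t)" using t by (intro minus_ln_one_minus_divide_le) auto
    finally show "norm (polylog 1 (of_real t) / of_real t) \<le> 2 - 2 * ln (1 - t)" .
  qed simp
  thus ?thesis by (simp add: integrable_on_Icc_iff_Ioo)
qed

lemma abs_ln_le:
  fixes x Y :: real
  assumes "0 < x" "x < Y" "1 < Y"
  shows "\<bar>ln x\<bar> \<le> 2 * ln Y - ln x"
proof (cases "x \<le> 1")
  case False
  hence "0 \<le> ln x" "ln x \<le> ln Y" using assms by simp_all
  thus ?thesis by simp
qed (use assms in simp)

lemma integrable_on_polylog_1_divide_of_real_1Y:
  assumes "1 < Y"
  shows "(\<lambda>t. polylog 1 (of_real t) / of_real t) integrable_on {1..Y}"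
proof -
  have "(\<lambda>t. polylog 1 (of_real t) / of_real t) integrable_on {1<..<Y}"
  proof (rule measurable_bounded_by_integrable_imp_integrable)
    have "continuous_on {1<..<Y}
            (\<lambda>t. - (of_real (ln (t - 1)) + of_real pi * \<i>) / complex_of_real t)"
      by (auto intro!: continuous_intros)
    hence "continuous_on {1<..<Y} (\<lambda>t. polylog 1 (of_real t) / of_real t)"
      by (rule continuous_on_cong[THEN iffD1, rotated 2])
         (auto simp: Ln_one_minus_of_real_gt_1)
    thus "(\<lambda>t. polylog 1 (of_real t) / of_real t) \<in> borel_measurable (lebesgue_on {1<..<Y})"
      by (rule continuous_imp_measurable_on_sets_lebesgue) simp
    have "(\<lambda>t::real. pi + 2 * ln Y - ln (t - 1)) integrable_on {1..Y}"
      using integrable_on_ln_minus_one[OF assms] by (intro integrable_diff) auto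
    thus "(\<lambda>t::real. pi + 2 * ln Y - ln (t - 1)) integrable_on {1<..<Y}"
      by (simp add: integrable_on_Icc_iff_Ioo)
    fix t :: real assume t: "t \<in> {1<..<Y}"
    have "norm (polylog 1 (of_real t) / of_real t) \<le> norm (polylog 1 (of_real t))"
      using t by (simp add: norm_divide divide_le_eq mult_le_cancel_left1)
    also have "\<dots> = norm (of_real (ln (t - 1)) + of_real pi * \<i> :: complex)"
      using t by (simp only: greaterThanLessThan_iff One_nat_def polylog.simps(2)
                             Ln_one_minus_of_real_gt_1 norm_minus_cancel)
    also have "\<dots> \<le> \<bar>ln (t - 1)\<bar> + pi"
      using norm_triangle_ineq[of "of_real (ln (t - 1))" "of_real pi * \<i> :: complex"]
      by (simp add: norm_mult)
    also have "\<bar>ln (t - 1)\<bar> \<le> 2 * ln Y - ln (t - 1)"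
      using t assms by (intro abs_ln_le) auto
    finally show "norm (polylog 1 (of_real t) / of_real t) \<le> pi + 2 * ln Y - ln (t - 1)"
      by simp
  qed simp
  thus ?thesis by (simp add: integrable_on_Icc_iff_Ioo)
qed

lemma continuous_on_polylog_Suc_Suc_of_real:
  assumes "(\<lambda>t. polylog (Suc n) (of_real t) / of_real t) integrable_on {0..Y}"
  shows "continuous_on {0..Y} (\<lambda>y. polylog (Suc (Suc n)) (of_real y))"
proof -
  have "continuous_on {0..Y} (\<lambda>y. integral {0..y} (\<lambda>t. polylog (Suc n) (of_real t) / of_real t))"
    by (rule indefinite_integral_continuous_1[OF assms])
  thus ?thesis
    by (rule continuous_on_cong[THEN iffD1, rotated 2]) (auto simp: polylog_of_real_eq_integral)
qed

lemma integrable_on_polylog_Suc_Suc_divide_of_real: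
  assumes IH: "\<And>Y. (\<lambda>t. polylog (Suc n) (of_real t) / of_real t) integrable_on {0..Y}"
  shows "(\<lambda>t. polylog (Suc (Suc n)) (of_real t) / of_real t) integrable_on {0..Y}"
proof -
  define Z where "Z = max Y 1"
  let ?q = "\<lambda>t::real. if t = 0 then 1 else polylog (Suc (Suc n)) (of_real t) / of_real t"
  \<comment> \<open>Near 0 the quotient is holomorphic; further out, polylog is continuous along the real
      axis, also across the cut at 1.\<close>
  have "continuous_on {0..1/2} (\<lambda>t::real. (\<lambda>w. if w = 0 then 1 else polylog (Suc (Suc n)) w / w) (of_real t))"
    by (rule continuous_on_compose2[OF holomorphic_on_imp_continuous_on[OF holomorphic_on_polylog_divide]])
       (auto intro!: continuous_intros simp: slit_plane_def)
  hence "continuous_on {0..1/2} ?q" by simp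
  moreover have "continuous_on {1/2..Z} (\<lambda>y. polylog (Suc (Suc n)) (of_real y))"
    by (rule continuous_on_subset[OF continuous_on_polylog_Suc_Suc_of_real[OF IH]]) auto
  hence "continuous_on {1/2..Z} (\<lambda>t. polylog (Suc (Suc n)) (of_real t) / of_real t)"
    by (intro continuous_intros) auto
  hence "continuous_on {1/2..Z} ?q"
    by (rule continuous_on_cong[THEN iffD1, rotated 2]) auto
  ultimately have "continuous_on ({0..1/2} \<union> {1/2..Z}) ?q"
    by (intro continuous_on_closed_Un) auto
  hence "continuous_on {0..Y} ?q"
    by (rule continuous_on_subset) (auto simp: Z_def)
  hence "?q integrable_on {0..Y}"
    by (rule integrable_continuous_interval)
  thus ?thesis
    by (rule integrable_spike_finite[of "{0}" "{0..Y}" _ ?q, rotated 2]) auto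
qed

lemma integrable_on_polylog_1_divide_of_real:
  "(\<lambda>t. polylog 1 (of_real t) / of_real t) integrable_on {0..Y}"
proof (cases "Y \<le> 1")
  case True
  thus ?thesis
    using integrable_on_subinterval[OF integrable_on_polylog_1_divide_of_real_01, of 0 Y] by auto
next
  case False
  thus ?thesis
    using Henstock_Kurzweil_Integration.integrable_combine[OF _ _ integrable_on_polylog_1_divide_of_real_01
      integrable_on_polylog_1_divide_of_real_1Y, of Y]
    by simp
qed

lemma integrable_on_polylog_divide_of_real:
  "(\<lambda>t. polylog (Suc n) (of_real t) / of_real t) integrable_on {0..Y}"
proof (induction n arbitrary: Y)
  case 0
  show ?case using integrable_on_polylog_1_divide_of_real by simp
next
  case (Suc n)
  thus ?case by (rule integrable_on_polylog_Suc_Suc_divide_of_real)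
qed

lemma continuous_on_polylog_of_real:
  "continuous_on {0..Y} (\<lambda>y. polylog (Suc (Suc n)) (of_real y))"
  by (rule continuous_on_polylog_Suc_Suc_of_real[OF integrable_on_polylog_divide_of_real])

lemma has_vector_derivative_polylog_of_real:
  assumes "1 < y"
  shows "((\<lambda>t. polylog (Suc n) (of_real t)) has_vector_derivative
           polylog n (of_real y) / of_real y) (at y)"
  using assms
proof (induction n arbitrary: y)
  case 0
  define h where "h = (\<lambda>w. - (Ln (w - 1) + of_real pi * \<i>))"
  have "(of_real y - 1 :: complex) \<notin> \<real>\<^sub>\<le>\<^sub>0"
    using 0 by (auto simp: complex_nonpos_Reals_iff)
  hence "(h has_field_derivative - inverse (of_real y - 1)) (at (of_real y))"
    unfolding h_def by (auto intro!: derivative_eq_intros)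
  hence "((\<lambda>t. h (of_real t)) has_vector_derivative - inverse (of_real y - 1)) (at y)"
    by (rule has_vector_derivative_real_field)
  moreover have "- inverse (of_real y - 1) = polylog 0 (of_real y) / (of_real y :: complex)"
    using 0 by (simp add: field_simps complex_eq_iff)
  moreover have "h (of_real t) = polylog (Suc 0) (of_real t)" if "t \<in> {1<..}" for t
    using that Ln_of_real[of "t - 1"] by (simp add: h_def Ln_one_minus_of_real_gt_1)
  ultimately show ?case
    using 0 by (auto intro: has_vector_derivative_transform_within_open[of _ _ _ "{1<..}"])
next
  case (Suc n)
  let ?g = "\<lambda>t. polylog (Suc n) (of_real t) / of_real t"
  have "isCont (\<lambda>t. polylog (Suc n) (of_real t)) y"
    using has_vector_derivative_continuous[OF Suc.IH[OF Suc.prems]] .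
  hence "isCont ?g y"
    using Suc.prems by (intro continuous_intros) auto
  hence "continuous (at y within {0..y + 1}) ?g"
    by (rule continuous_at_imp_continuous_at_within)
  hence "((\<lambda>u. integral {0..u} ?g) has_vector_derivative ?g y) (at y within {0..y + 1})"
    using integral_has_vector_derivative_continuous_at[of ?g 0 "y + 1" y "{}"] Suc.prems
          integrable_on_polylog_divide_of_real
    by simp
  moreover have "at y within {0..y + 1} = at y"
    using Suc.prems by (simp add: at_within_Icc_at)
  ultimately show ?case
    using Suc.prems
    by (auto intro: has_vector_derivative_transform_within_open[of _ _ _ "{0<..}"]
             simp: polylog_of_real_eq_integral)
qed

lemma polylog_eq_polylog_series_cball:
  assumes "2 \<le> n" "w \<in> cball 0 1"
  shows "polylog n w = polylog_series n w"
proof -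
  obtain m where n: "n = Suc (Suc m)" using assms(1) by (metis add_2_eq_Suc le_Suc_ex)
  have radius: "((\<lambda>r::real. of_real r * w) \<longlongrightarrow> w) (at_left 1)"
    by (rule tendsto_eq_intros refl)+ simp
  have inside: "\<forall>\<^sub>F r in at_left 1. norm (of_real r * w) \<le> r \<and> r < (1::real)"
    using eventually_at_left_real[of 0 1] assms(2)
    by (auto elim!: eventually_mono simp: norm_mult mult_left_le)
  have lim_polylog: "((\<lambda>r. polylog n (of_real r * w)) \<longlongrightarrow> polylog n w) (at_left 1)"
  proof (cases "w = 1")
    case True
    \<comment> \<open>1 is not in the slit plane; continuity comes from the integral along [0, 1].\<close>
    thus ?thesis using continuous_on_Icc_at_leftD[OF continuous_on_polylog_of_real[of 1 m]]
      by (simp add: n)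
  next
    case False
    hence "w \<in> slit_plane" using assms(2) cball_minus_1_subset_slit_plane by auto
    thus ?thesis unfolding n by (intro isCont_tendsto_compose[OF isCont_polylog radius])
  qed
  have lim_series: "((\<lambda>r. polylog_series n (of_real r * w)) \<longlongrightarrow> polylog_series n w) (at_left 1)"
    by (rule continuous_on_tendsto_compose[OF continuous_on_polylog_series[OF assms(1)] radius])
       (use assms(2) inside in \<open>auto elim!: eventually_mono\<close>)
  have "\<forall>\<^sub>F r in at_left 1. polylog n (of_real r * w) = polylog_series n (of_real r * w)"
    using inside by eventually_elim (auto simp: n intro!: polylog_eq_polylog_series)
  hence "((\<lambda>r. polylog_series n (of_real r * w)) \<longlongrightarrow> polylog n w) (at_left 1)"
    by (rule Lim_transform_eventually[OF lim_polylog])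
  thus ?thesis by (rule tendsto_unique[OF trivial_limit_at_left_real _ lim_series])
qed

lemma continuous_on_polylog_cball: "2 \<le> n \<Longrightarrow> continuous_on (cball 0 1) (polylog n)"
  using continuous_on_polylog_series
  by (rule continuous_on_cong[THEN iffD1, rotated 2]) (auto simp: polylog_eq_polylog_series_cball)

lemma polylog_at_1: "2 \<le> n \<Longrightarrow> polylog n 1 = zeta (of_nat n)"
  by (simp add: polylog_eq_polylog_series_cball zeta_of_nat_eq_polylog_series)

lemma polylog_2_at_1: "polylog 2 1 = of_real (pi ^ 2 / 6)"
  using polylog_at_1[of 2] zeta_2 by simp

section \<open>The digamma function\<close>

lemma Digamma_reflection_complex:
  fixes v :: complex
  assumes "v \<notin> \<int>"
  shows "Digamma (1 - v) - Digamma v = of_real pi * cot (of_real pi * v)"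
proof -
  have v: "v \<notin> \<int>\<^sub>\<le>\<^sub>0" "1 - v \<notin> \<int>\<^sub>\<le>\<^sub>0"
    using assms nonpos_Ints_subset_Ints by (auto dest: Ints_diff[OF Ints_1])
  let ?P = "rGamma v * rGamma (1 - v)"
  have "((\<lambda>v::complex. rGamma v * rGamma (1 - v)) has_field_derivative
          - rGamma v * Digamma v * rGamma (1 - v) + rGamma v * (rGamma (1 - v) * Digamma (1 - v))) (at v)"
    using v by (auto intro!: derivative_eq_intros has_field_derivative_rGamma_no_nonpos_int
                     simp: algebra_simps)
  moreover have "(\<lambda>v. rGamma v * rGamma (1 - v)) = (\<lambda>v::complex. sin (of_real pi * v) / of_real pi)"
    by (rule ext) (rule rGamma_reflection_complex)
  moreover have "((\<lambda>v::complex. sin (of_real pi * v) / of_real pi) has_field_derivative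
                    cos (of_real pi * v)) (at v)"
    by (auto intro!: derivative_eq_intros)
  ultimately have "- rGamma v * Digamma v * rGamma (1 - v) + rGamma v * (rGamma (1 - v) * Digamma (1 - v))
                     = cos (of_real pi * v)"
    using DERIV_unique by metis
  hence "?P * (Digamma (1 - v) - Digamma v) = cos (of_real pi * v)"
    by (simp add: algebra_simps)
  moreover have "?P \<noteq> 0" using v by (simp add: rGamma_eq_zero_iff)
  ultimately have "Digamma (1 - v) - Digamma v = cos (of_real pi * v) / ?P"
    by (simp add: field_simps)
  also have "\<dots> = of_real pi * cot (of_real pi * v)"
    unfolding rGamma_reflection_complex cot_def by (simp add: divide_divide_eq_right mult.commute)
  finally show ?thesis .
qed

lemma sums_Digamma_1_plus:
  fixes v :: complex
  assumes "norm v < 1"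
  shows "(\<lambda>n. Polygamma n 1 / fact n * v ^ n) sums Digamma (1 + v)"
proof -
  have "ball 1 1 \<inter> \<int>\<^sub>\<le>\<^sub>0 = ({} :: complex set)"
  proof safe
    fix x :: complex assume x: "x \<in> ball 1 1" "x \<in> \<int>\<^sub>\<le>\<^sub>0"
    from x(2) have "Re x \<le> 0" by (auto elim!: nonpos_Ints_cases)
    moreover have "Re (1 - x) < 1"
      using x(1) complex_Re_le_cmod[of "1 - x"] by (simp add: dist_norm)
    ultimately show "x \<in> {}" by simp
  qed
  hence "(\<lambda>n. (deriv ^^ n) Digamma 1 / fact n * (1 + v - 1) ^ n) sums Digamma (1 + v)"
    by (intro holomorphic_power_series holomorphic_on_Polygamma) (use assms in \<open>auto simp: dist_norm\<close>)
  moreover have "(deriv ^^ n) Digamma 1 = Polygamma n (1::complex)" for n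
    using higher_deriv_Polygamma[of "1::complex" n 0] by simp
  ultimately show ?thesis by simp
qed

lemma Polygamma_1_eq_zeta:
  assumes "0 < n"
  shows "Polygamma n (1::complex) / fact n = (-1) ^ Suc n * zeta (of_nat (Suc n))"
proof -
  have "zeta (of_nat (Suc n)) = (\<Sum>k. inverse ((1 + of_nat k) ^ Suc n))"
    using zeta_of_nat_eq_suminf[of "Suc n"] by (simp add: inverse_eq_divide add.commute)
  thus ?thesis using assms by (simp add: Polygamma_def)
qed

lemma sums_Digamma_1_minus_minus_Digamma_1_plus:
  fixes v :: complex
  assumes "norm v < 1"
  shows "(\<lambda>j. - 2 * zeta (of_nat (2 * Suc j)) * v ^ (2 * j + 1))
           sums (Digamma (1 - v) - Digamma (1 + v))"
proof -
  let ?c = "\<lambda>n. Polygamma n 1 / fact n * ((- v) ^ n - v ^ n)"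
  have "(\<lambda>n. Polygamma n 1 / fact n * (- v) ^ n - Polygamma n 1 / fact n * v ^ n)
          sums (Digamma (1 + - v) - Digamma (1 + v))"
    using assms by (intro sums_diff sums_Digamma_1_plus) auto
  hence "?c sums (Digamma (1 - v) - Digamma (1 + v))"
    by (simp add: right_diff_distrib)
  moreover have "?c n = 0" if "n \<notin> range (\<lambda>j. 2 * j + 1)" for n
  proof -
    have "even n" using that by (metis oddE rangeI)
    thus ?thesis by simp
  qed
  ultimately have "(\<lambda>j. ?c (2 * j + 1)) sums (Digamma (1 - v) - Digamma (1 + v))"
    by (subst sums_mono_reindex) (auto simp: strict_mono_def)
  moreover have "?c (2 * j + 1) = - 2 * zeta (of_nat (2 * Suc j)) * v ^ (2 * j + 1)" for j
    using Polygamma_1_eq_zeta[of "2 * j + 1"] by simp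
  ultimately show ?thesis by simp
qed

section \<open>The left-hand side\<close>

definition G_coeff :: "nat \<Rightarrow> complex" where
  "G_coeff n = (if even n \<and> 4 \<le> n
     then 2 * (-1) ^ (n div 2) * zeta (of_nat (n - 2)) / (of_nat (n - 1) * of_nat n) else 0)"

definition G :: "complex \<Rightarrow> complex" where
  "G z = (\<Sum>n. G_coeff n * z ^ n)"

definition G' :: "complex \<Rightarrow> complex" where
  "G' z = (\<Sum>n. diffs G_coeff n * z ^ n)"

definition G'' :: "complex \<Rightarrow> complex" where
  "G'' z = (\<Sum>n. diffs (diffs G_coeff) n * z ^ n)"

lemma G_coeff_eq_0: "n \<notin> range (\<lambda>j. 2 * j + 4) \<Longrightarrow> G_coeff n = 0"
proof (rule ccontr)
  assume "G_coeff n \<noteq> 0"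
  hence "even n" "4 \<le> n" by (auto simp: G_coeff_def split: if_splits)
  hence "n = 2 * (n div 2 - 2) + 4" by auto
  thus "n \<notin> range (\<lambda>j. 2 * j + 4) \<Longrightarrow> False" by (metis rangeI)
qed

lemma G_coeff_even:
  "G_coeff (2 * j + 4) =
     2 * (-1) ^ j * zeta (of_nat (2 * Suc j)) / (of_nat (2 * j + 3) * of_nat (2 * j + 4))"
proof -
  have "(2 * j + 4) div 2 = j + 2" "2 * j + 4 - 2 = 2 * Suc j" "2 * j + 4 - 1 = 2 * j + 3" by simp_all
  thus ?thesis unfolding G_coeff_def by (simp del: of_nat_add of_nat_mult)
qed

lemma norm_G_coeff_le: "norm (G_coeff n) \<le> pi ^ 2 * inverse (real n ^ 2)"
proof (cases "even n \<and> 4 \<le> n")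
  case True
  have "norm (G_coeff n) = 2 * norm (zeta (of_nat (n - 2))) * inverse (real (n - 1) * real n)"
    using True
    by (simp add: G_coeff_def norm_divide norm_mult norm_power divide_inverse norm_inverse
             del: of_nat_diff)
  also have "\<dots> \<le> 2 * (pi ^ 2 / 6) * (2 * inverse (real n ^ 2))"
    using True
    by (intro mult_mono norm_zeta_of_nat_le) (auto simp: of_nat_diff field_simps power2_eq_square)
  also have "\<dots> \<le> pi ^ 2 * inverse (real n ^ 2)" by simp
  finally show ?thesis .
qed (auto simp: G_coeff_def)

lemma norm_G_series_term_le:
  assumes "norm z \<le> 1"
  shows "norm (G_coeff n * z ^ n) \<le> pi ^ 2 * inverse (real n ^ 2)"
proof -
  have "norm (G_coeff n * z ^ n) \<le> norm (G_coeff n)"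
    using assms by (simp add: norm_mult norm_power power_le_one mult_left_le)
  thus ?thesis using norm_G_coeff_le order_trans by blast
qed

lemma summable_G_series: "norm z \<le> 1 \<Longrightarrow> summable (\<lambda>n. G_coeff n * z ^ n)"
  by (rule summable_comparison_test'[OF summable_mult[OF inverse_power_summable[of 2]]])
     (auto intro: norm_G_series_term_le)

lemma continuous_on_G: "continuous_on (cball 0 1) G"
proof -
  have "uniform_limit (cball 0 1) (\<lambda>N z. \<Sum>n<N. G_coeff n * z ^ n) G sequentially"
    unfolding G_def[abs_def]
    by (rule Weierstrass_m_test[OF _ summable_mult[OF inverse_power_summable[of 2]]])
       (auto intro: norm_G_series_term_le)
  thus ?thesis
    by (rule uniform_limit_theorem[rotated]) (auto intro!: always_eventually continuous_intros)
qed

lemma summable_G'_series: "norm z < 1 \<Longrightarrow> summable (\<lambda>n. diffs G_coeff n * z ^ n)"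
  by (rule termdiff_converges[of _ 1]) (auto intro: summable_G_series)

lemma summable_G''_series: "norm z < 1 \<Longrightarrow> summable (\<lambda>n. diffs (diffs G_coeff) n * z ^ n)"
  by (rule termdiff_converges[of _ 1]) (auto intro: summable_G'_series)

lemma has_field_derivative_G: "norm z < 1 \<Longrightarrow> (G has_field_derivative G' z) (at z)"
  unfolding G_def[abs_def] G'_def by (rule termdiffs_strong'[of 1]) (auto intro: summable_G_series)

lemma has_field_derivative_G': "norm z < 1 \<Longrightarrow> (G' has_field_derivative G'' z) (at z)"
  unfolding G'_def[abs_def] G''_def by (rule termdiffs_strong'[of 1]) (auto intro: summable_G'_series)

lemma G_0 [simp]: "G 0 = 0" and G'_0 [simp]: "G' 0 = 0"
  by (simp_all add: G_def G'_def diffs_def G_coeff_def)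

lemma sums_G_divide_square:
  assumes "z \<noteq> 0" "norm z \<le> 1"
  shows "(\<lambda>j::nat. (-1) ^ j * zeta (of_nat (2 * Suc j)) * z ^ (2 * Suc j)
            / (of_nat (2 * Suc j + 1) * of_nat (Suc j + 1))) sums (G z / z ^ 2)"
proof -
  have "(\<lambda>n. G_coeff n * z ^ n) sums G z"
    unfolding G_def by (rule summable_sums[OF summable_G_series[OF assms(2)]])
  hence "(\<lambda>j. G_coeff (2 * j + 4) * z ^ (2 * j + 4)) sums G z"
    by (subst sums_mono_reindex) (auto simp: strict_mono_def G_coeff_eq_0)
  hence "(\<lambda>j. G_coeff (2 * j + 4) * z ^ (2 * j + 4) / z ^ 2) sums (G z / z ^ 2)"
    by (rule sums_divide)
  moreover have "G_coeff (2 * j + 4) * z ^ (2 * j + 4) / z ^ 2 =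
      (-1) ^ j * zeta (of_nat (2 * Suc j)) * z ^ (2 * Suc j)
        / (of_nat (2 * Suc j + 1) * of_nat (Suc j + 1))" for j
  proof -
    have "2 * j + 4 = 2 * Suc j + 2" by simp
    hence "z ^ (2 * j + 4) = z ^ (2 * Suc j) * z ^ 2" by (simp only: power_add)
    hence "G_coeff (2 * j + 4) * z ^ (2 * j + 4) / z ^ 2 = G_coeff (2 * j + 4) * z ^ (2 * Suc j)"
      using assms(1) by simp
    moreover have "of_nat (2 * j + 3) = (of_nat (2 * Suc j + 1) :: complex)"
      and "of_nat (2 * j + 4) = (2 * of_nat (Suc j + 1) :: complex)" by simp_all
    moreover have "2 * a * b / (A * (2 * B)) * c = a * b * c / (A * B)" for a b c A B :: complex
      by (cases "A = 0"; cases "B = 0") (simp_all add: field_simps)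
    ultimately show ?thesis by (simp only: G_coeff_even)
  qed
  ultimately show ?thesis by simp
qed

lemma diffs_diffs_G_coeff:
  "diffs (diffs G_coeff) n = of_nat (Suc n) * of_nat (Suc (Suc n)) * G_coeff (Suc (Suc n))"
  by (simp add: diffs_def mult.assoc)

lemma diffs_diffs_G_coeff_eq_0:
  "n \<notin> range (\<lambda>j. 2 * Suc j) \<Longrightarrow> diffs (diffs G_coeff) n = 0"
proof -
  assume "n \<notin> range (\<lambda>j. 2 * Suc j)"
  hence "Suc (Suc n) \<notin> range (\<lambda>j. 2 * j + 4)" by (auto simp: image_iff)
  thus ?thesis by (simp add: diffs_diffs_G_coeff G_coeff_eq_0)
qed

lemma diffs_diffs_G_coeff_even:
  "diffs (diffs G_coeff) (2 * Suc j) = 2 * (-1) ^ j * zeta (of_nat (2 * Suc j))"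
proof -
  have e: "Suc (Suc (2 * Suc j)) = 2 * j + 4" "Suc (2 * Suc j) = 2 * j + 3" by simp_all
  have "(of_nat (2 * j + 3) * of_nat (2 * j + 4) :: complex) \<noteq> 0"
    by (simp only: of_nat_mult[symmetric] of_nat_eq_0_iff) simp
  thus ?thesis unfolding diffs_diffs_G_coeff e(1) G_coeff_even unfolding e(2) by simp
qed

lemma sums_G'':
  assumes "norm z < 1"
  shows "(\<lambda>j. 2 * (-1) ^ j * zeta (of_nat (2 * Suc j)) * z ^ (2 * Suc j)) sums G'' z"
proof -
  have "(\<lambda>n. diffs (diffs G_coeff) n * z ^ n) sums G'' z"
    unfolding G''_def using assms by (intro summable_sums summable_G''_series)
  hence "(\<lambda>j. diffs (diffs G_coeff) (2 * Suc j) * z ^ (2 * Suc j)) sums G'' z"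
    by (subst sums_mono_reindex) (auto simp: strict_mono_def diffs_diffs_G_coeff_eq_0)
  thus ?thesis unfolding diffs_diffs_G_coeff_even .
qed

lemma G''_eq_Digamma:
  assumes "norm z < 1"
  shows "G'' z = \<i> * z * (Digamma (1 - \<i> * z) - Digamma (1 + \<i> * z))"
proof -
  have "(\<lambda>j. \<i> * z * (- 2 * zeta (of_nat (2 * Suc j)) * (\<i> * z) ^ (2 * j + 1)))
          sums (\<i> * z * (Digamma (1 - \<i> * z) - Digamma (1 + \<i> * z)))"
    using assms by (intro sums_mult sums_Digamma_1_minus_minus_Digamma_1_plus) (simp add: norm_mult)
  moreover have "\<i> * z * (- 2 * c * (\<i> * z) ^ (2 * j + 1)) = 2 * (-1) ^ j * c * z ^ (2 * Suc j)"
    for c and j :: nat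
  proof -
    have "\<i> * z * (\<i> * z) ^ (2 * j + 1) = ((\<i> * z) ^ 2) ^ Suc j"
      by (simp add: power_mult[symmetric] power_Suc[symmetric] del: power_Suc)
    also have "(\<i> * z) ^ 2 = (-1) * z ^ 2" by (simp add: power_mult_distrib)
    also have "((-1) * z ^ 2) ^ Suc j = (-1) ^ Suc j * z ^ (2 * Suc j)"
      by (simp only: power_mult_distrib power_mult)
    finally show ?thesis by (simp add: algebra_simps)
  qed
  ultimately have "(\<lambda>j. 2 * (-1) ^ j * zeta (of_nat (2 * Suc j)) * z ^ (2 * Suc j))
                    sums (\<i> * z * (Digamma (1 - \<i> * z) - Digamma (1 + \<i> * z)))"
    by (simp only:)
  with sums_G''[OF assms] show ?thesis by (rule sums_unique2)
qed

section \<open>The right-hand side\<close>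

definition E :: "complex \<Rightarrow> complex" where
  "E z = exp (2 * of_real pi * z)"

definition K :: "complex \<Rightarrow> complex" where
  "K z = of_real pi * z * (E z + 1) / (E z - 1) - 1"

definition H :: "complex \<Rightarrow> complex" where
  "H z = - (z ^ 2) / 2 - of_real pi * z ^ 3 / 6 - of_real pi * z / 12 - zeta 3 / (2 * of_real pi ^ 2)
         + polylog 3 (E z) / (2 * of_real pi ^ 2) - z * polylog 2 (E z) / (2 * of_real pi)"

definition H' :: "complex \<Rightarrow> complex" where
  "H' z = - z - of_real pi * z ^ 2 / 2 - of_real pi / 12 + polylog 2 (E z) / (2 * of_real pi)
          - z * polylog 1 (E z)"

lemma has_field_derivative_E: "(E has_field_derivative 2 * of_real pi * E z) (at z)"
  unfolding E_def[abs_def] by (auto intro!: derivative_eq_intros)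

lemma E_nonzero [simp]: "E z \<noteq> 0"
  by (simp add: E_def)

lemma E_of_real: "E (of_real t) = of_real (exp (2 * pi * t))"
  by (simp add: E_def flip: exp_of_real)

lemma E_eq_1_imp: "E z = 1 \<Longrightarrow> Re z = 0 \<and> Im z \<in> \<int>"
  unfolding E_def exp_eq_1 by (auto simp: field_simps)

lemma E_notin_slit_plane: "E z \<notin> slit_plane \<Longrightarrow> 0 \<le> Re z \<and> Im z \<in> \<int>"
proof -
  assume "E z \<notin> slit_plane"
  hence "E z = of_real (Re (E z))" "1 \<le> Re (E z)" by (auto simp: slit_plane_def complex_eq_iff)
  hence "exp (2 * of_real pi * z) = exp (of_real (ln (Re (E z))))"
    unfolding exp_of_real by (simp add: E_def del: exp_of_real)
  then obtain n :: int where n: "2 * of_real pi * z = of_real (ln (Re (E z))) + of_real (of_int (2 * n) * pi) * \<i>"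
    unfolding exp_eq by blast
  have "2 * pi * Re z = ln (Re (E z))" "2 * pi * Im z = 2 * of_int n * pi"
    using arg_cong[OF n, of Re] arg_cong[OF n, of Im] by simp_all
  moreover have "0 \<le> ln (Re (E z))" using \<open>1 \<le> Re (E z)\<close> by simp
  ultimately have "0 \<le> 2 * pi * Re z" "Im z = of_int n" by simp_all
  thus ?thesis using pi_gt_zero by (auto simp: zero_le_mult_iff)
qed

lemma cot_i_times:
  fixes w :: complex
  assumes "exp (2 * w) \<noteq> 1"
  shows "cot (\<i> * w) = - \<i> * (exp (2 * w) + 1) / (exp (2 * w) - 1)"
proof -
  define a where "a = exp w"
  have a: "a \<noteq> 0" "a ^ 2 \<noteq> 1"
    using assms by (auto simp: a_def simp flip: exp_double exp_of_nat_mult)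
  have nz: "inverse a - a \<noteq> 0" "a ^ 2 - 1 \<noteq> 0"
    using a by (auto simp: field_simps power2_eq_square)
  have cs: "cos (\<i> * w) = (inverse a + a) / 2" "sin (\<i> * w) = (inverse a - a) / (2 * \<i>)"
    unfolding cos_exp_eq sin_exp_eq a_def by (simp_all add: exp_minus algebra_simps)
  have "cot (\<i> * w) = ((inverse a + a) / 2) / ((inverse a - a) / (2 * \<i>))"
    unfolding cot_def cs ..
  also have "\<dots> = - \<i> * (a ^ 2 + 1) / (a ^ 2 - 1)"
    using a nz by (simp add: field_simps power2_eq_square)
  also have "a ^ 2 = exp (2 * w)" by (simp add: a_def exp_double[symmetric])
  finally show ?thesis .
qed

lemma G''_eq_K:
  assumes "z \<noteq> 0" "norm z < 1"
  shows "G'' z = K z"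
proof -
  define v where "v = \<i> * z"
  have "v \<notin> \<int>"
  proof
    assume "v \<in> \<int>"
    then obtain m :: int where m: "v = of_int m" by (auto elim: Ints_cases)
    have "norm v < 1" using assms by (simp add: v_def norm_mult)
    hence "m = 0" using m by simp
    thus False using m assms by (simp add: v_def)
  qed
  have E1: "E z \<noteq> 1"
  proof
    assume "E z = 1"
    then obtain n :: int where "Re z = 0" "Im z = of_int n" using E_eq_1_imp by (auto elim: Ints_cases)
    moreover have "\<bar>Im z\<bar> < 1" using assms(2) abs_Im_le_cmod[of z] by linarith
    ultimately show False using assms(1) by (simp add: complex_eq_iff)
  qed
  have "G'' z = v * (Digamma (1 - v) - Digamma (1 + v))"
    using G''_eq_Digamma[OF assms(2)] by (simp add: v_def)
  also have "\<dots> = v * (of_real pi * cot (of_real pi * v)) - 1"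
    using Digamma_reflection_complex[OF \<open>v \<notin> \<int>\<close>] Digamma_plus1[of v] assms(1)
    by (simp add: v_def algebra_simps)
  also have "of_real pi * v = \<i> * (of_real pi * z)" by (simp add: v_def)
  also have "cot (\<i> * (of_real pi * z)) = - \<i> * (E z + 1) / (E z - 1)"
    using E1 by (simp add: cot_i_times E_def mult.assoc)
  finally show ?thesis using E1 by (simp add: K_def v_def field_simps)
qed

lemma has_field_derivative_polylog_E:
  assumes "E z \<in> slit_plane"
  shows "((\<lambda>z. polylog (Suc n) (E z)) has_field_derivative 2 * of_real pi * polylog n (E z)) (at z)"
  using DERIV_chain2[OF has_field_derivative_polylog_nonzero[OF assms E_nonzero] has_field_derivative_E]
  by (simp add: mult.commute)

(* For t > 0 the point E t lies on the cut [1, oo) of polylog, so only derivatives along the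
   real axis are available there. *)
lemma has_vector_derivative_polylog_E_of_real:
  assumes "0 < t"
  shows "((\<lambda>t. polylog (Suc n) (E (of_real t))) has_vector_derivative
           2 * of_real pi * polylog n (E (of_real t))) (at t)"
proof -
  have "((\<lambda>t. exp (2 * pi * t)) has_vector_derivative 2 * pi * exp (2 * pi * t)) (at t)"
    unfolding has_real_derivative_iff_has_vector_derivative[symmetric]
    by (auto intro!: derivative_eq_intros)
  moreover have "1 < exp (2 * pi * t)" using assms by simp
  ultimately have "((\<lambda>t. polylog (Suc n) (of_real (exp (2 * pi * t)))) has_vector_derivative
      (2 * pi * exp (2 * pi * t)) *\<^sub>R (polylog n (of_real (exp (2 * pi * t))) / of_real (exp (2 * pi * t))))
      (at t)"
    using vector_diff_chain_at has_vector_derivative_polylog_of_real unfolding o_def by blast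
  thus ?thesis
    unfolding E_of_real by (rule has_vector_derivative_eq_rhs) (simp add: scaleR_conv_of_real)
qed

lemma has_field_derivative_H:
  assumes "E z \<in> slit_plane"
  shows "(H has_field_derivative H' z) (at z)"
proof -
  have "((\<lambda>z. polylog 3 (E z)) has_field_derivative 2 * of_real pi * polylog 2 (E z)) (at z)"
    "((\<lambda>z. polylog 2 (E z)) has_field_derivative 2 * of_real pi * polylog 1 (E z)) (at z)"
    using has_field_derivative_polylog_E[OF assms, of 2] has_field_derivative_polylog_E[OF assms, of 1]
    by (simp_all add: eval_nat_numeral del: polylog.simps)
  thus ?thesis unfolding H_def[abs_def]
    by (auto intro!: derivative_eq_intros simp: H'_def field_simps power2_eq_square power3_eq_cube)
qed

lemma has_field_derivative_H':
  assumes "E z \<in> slit_plane"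
  shows "(H' has_field_derivative K z) (at z)"
proof -
  have "((\<lambda>z. polylog 2 (E z)) has_field_derivative 2 * of_real pi * polylog (Suc 0) (E z)) (at z)"
    "((\<lambda>z. polylog (Suc 0) (E z)) has_field_derivative 2 * of_real pi * (E z / (1 - E z))) (at z)"
    using has_field_derivative_polylog_E[OF assms, of 1] has_field_derivative_polylog_E[OF assms, of 0]
    by (simp_all add: eval_nat_numeral del: polylog.simps(2))
  moreover have "1 - E z \<noteq> 0" "E z - 1 \<noteq> 0" using assms by auto
  ultimately show ?thesis unfolding H'_def[abs_def]
    by (auto intro!: derivative_eq_intros simp del: polylog.simps simp: K_def field_simps)
qed

lemma has_vector_derivative_H_of_real:
  assumes "0 < t"
  shows "((\<lambda>t. H (of_real t)) has_vector_derivative H' (of_real t)) (at t)"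
proof -
  define P where "P z = - (z ^ 2) / 2 - of_real pi * z ^ 3 / 6 - of_real pi * z / 12
                        - zeta 3 / (2 * of_real pi ^ 2)" for z :: complex
  let ?L = "\<lambda>k t. polylog k (E (of_real t))"
  have "(P has_field_derivative - of_real t - of_real pi * of_real t ^ 2 / 2 - of_real pi / 12)
          (at (of_real t))"
    unfolding P_def by (auto intro!: derivative_eq_intros simp: field_simps power2_eq_square)
  hence "((\<lambda>t. P (of_real t)) has_vector_derivative
           - of_real t - of_real pi * of_real t ^ 2 / 2 - of_real pi / 12) (at t)"
    by (rule has_vector_derivative_real_field)
  moreover have "(?L 3 has_vector_derivative 2 * of_real pi * ?L 2 t) (at t)"
    "(?L 2 has_vector_derivative 2 * of_real pi * ?L 1 t) (at t)"
    using has_vector_derivative_polylog_E_of_real[OF assms, of 2]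
          has_vector_derivative_polylog_E_of_real[OF assms, of 1]
    by (simp_all add: eval_nat_numeral del: polylog.simps(2))
  moreover have "((\<lambda>t. complex_of_real t) has_vector_derivative 1) (at t)"
    using has_vector_derivative_of_real[OF DERIV_ident] by simp
  ultimately have "((\<lambda>t. P (of_real t) + ?L 3 t / (2 * of_real pi ^ 2) - of_real t * ?L 2 t / (2 * of_real pi))
      has_vector_derivative
        (- of_real t - of_real pi * of_real t ^ 2 / 2 - of_real pi / 12)
        + 2 * of_real pi * ?L 2 t / (2 * of_real pi ^ 2)
        - (of_real t * (2 * of_real pi * ?L 1 t) + 1 * ?L 2 t) / (2 * of_real pi)) (at t)"
    by (intro has_vector_derivative_diff has_vector_derivative_add has_vector_derivative_divide
              has_vector_derivative_mult)
  moreover have "(\<lambda>t. H (of_real t)) =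
      (\<lambda>t. P (of_real t) + ?L 3 t / (2 * of_real pi ^ 2) - of_real t * ?L 2 t / (2 * of_real pi))"
    by (simp add: H_def P_def fun_eq_iff)
  ultimately show ?thesis
    by (auto elim!: has_vector_derivative_eq_rhs simp: H'_def field_simps power2_eq_square)
qed

lemma has_vector_derivative_H'_of_real:
  assumes "0 < t"
  shows "((\<lambda>t. H' (of_real t)) has_vector_derivative K (of_real t)) (at t)"
proof -
  define Q where "Q z = - z - of_real pi * z ^ 2 / 2 - of_real pi / 12" for z :: complex
  let ?L = "\<lambda>k t. polylog k (E (of_real t))"
  have "(Q has_field_derivative - 1 - of_real pi * of_real t) (at (of_real t))"
    unfolding Q_def by (auto intro!: derivative_eq_intros simp: field_simps power2_eq_square)
  hence "((\<lambda>t. Q (of_real t)) has_vector_derivative - 1 - of_real pi * of_real t) (at t)"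
    by (rule has_vector_derivative_real_field)
  moreover have "(?L 2 has_vector_derivative 2 * of_real pi * ?L (Suc 0) t) (at t)"
    "(?L (Suc 0) has_vector_derivative 2 * of_real pi * (E (of_real t) / (1 - E (of_real t)))) (at t)"
    using has_vector_derivative_polylog_E_of_real[OF assms, of 1]
          has_vector_derivative_polylog_E_of_real[OF assms, of 0]
    by (simp_all add: eval_nat_numeral del: polylog.simps(2))
  moreover have "((\<lambda>t. complex_of_real t) has_vector_derivative 1) (at t)"
    using has_vector_derivative_of_real[OF DERIV_ident] by simp
  ultimately have "((\<lambda>t. Q (of_real t) + ?L 2 t / (2 * of_real pi) - of_real t * ?L (Suc 0) t)
      has_vector_derivative
        (- 1 - of_real pi * of_real t) + 2 * of_real pi * ?L (Suc 0) t / (2 * of_real pi)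
        - (of_real t * (2 * of_real pi * (E (of_real t) / (1 - E (of_real t)))) + 1 * ?L (Suc 0) t))
      (at t)"
    by (intro has_vector_derivative_diff has_vector_derivative_add has_vector_derivative_divide
              has_vector_derivative_mult)
  moreover have "(\<lambda>t. H' (of_real t)) =
      (\<lambda>t. Q (of_real t) + ?L 2 t / (2 * of_real pi) - of_real t * ?L (Suc 0) t)"
    by (simp add: H'_def Q_def fun_eq_iff del: polylog.simps(2))
  moreover have "E (of_real t) \<noteq> 1" "1 - E (of_real t) \<noteq> 0"
    using assms by (auto simp: E_of_real)
  ultimately show ?thesis
    by (auto elim!: has_vector_derivative_eq_rhs simp: K_def field_simps simp del: polylog.simps(2))
qed

lemma tendsto_polylog_E_of_real_0:
  "((\<lambda>x. polylog (Suc (Suc n)) (E (of_real x))) \<longlongrightarrow> polylog (Suc (Suc n)) 1) (at (0::real))"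
proof -
  have lim: "((\<lambda>x::real. exp (2 * pi * x)) \<longlongrightarrow> 1) (at 0)"
    by (rule tendsto_eq_intros refl)+ simp
  have "\<forall>\<^sub>F x in at (0::real). x < 1"
    using eventually_at_in_open'[of "{..<1}" "0::real"] by simp
  hence ev: "\<forall>\<^sub>F x in at (0::real). exp (2 * pi * x) \<in> {0..exp (2 * pi)}"
  proof eventually_elim
    case (elim x)
    hence "2 * pi * x \<le> 2 * pi * 1" using pi_gt_zero by (intro mult_left_mono) auto
    thus ?case by simp
  qed
  have "((\<lambda>x. polylog (Suc (Suc n)) (of_real (exp (2 * pi * x)))) \<longlongrightarrow>
          polylog (Suc (Suc n)) (of_real 1)) (at (0::real))"
    by (rule continuous_on_tendsto_compose[OF continuous_on_polylog_of_real lim _ ev]) simp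
  thus ?thesis by (simp add: E_of_real)
qed

lemma tendsto_of_real_times_polylog_1_E_0:
  "((\<lambda>x. of_real x * polylog 1 (E (of_real x))) \<longlongrightarrow> 0) (at (0::real))"
  unfolding filterlim_at_split
proof
  have "((\<lambda>x::real. x * ln (1 - exp (2 * pi * x))) \<longlongrightarrow> 0) (at_left 0)"
    by real_asymp
  hence "((\<lambda>x. - of_real (x * ln (1 - exp (2 * pi * x))) :: complex) \<longlongrightarrow> 0) (at_left 0)"
    using tendsto_minus[OF tendsto_of_real] by fastforce
  moreover have "\<forall>\<^sub>F x in at_left 0. - of_real (x * ln (1 - exp (2 * pi * x)))
                                       = of_real x * polylog 1 (E (of_real x))"
  proof (rule eventually_mono[OF eventually_at_left_real[of "-1" "0::real"]])
    fix x :: real assume "x \<in> {-1<..<0}"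
    hence "exp (2 * pi * x) < 1" using pi_gt_zero by (simp add: mult_pos_neg)
    thus "- of_real (x * ln (1 - exp (2 * pi * x))) = of_real x * polylog 1 (E (of_real x))"
      by (simp add: E_of_real Ln_one_minus_of_real_lt_1)
  qed simp
  ultimately show "((\<lambda>x. of_real x * polylog 1 (E (of_real x))) \<longlongrightarrow> 0) (at_left 0)"
    by (rule Lim_transform_eventually)
next
  have "((\<lambda>x::real. x * ln (exp (2 * pi * x) - 1)) \<longlongrightarrow> 0) (at_right 0)"
    by real_asymp
  hence "((\<lambda>x. - (of_real (x * ln (exp (2 * pi * x) - 1)) + of_real x * (of_real pi * \<i>)) :: complex)
           \<longlongrightarrow> - (of_real 0 + of_real 0 * (of_real pi * \<i>))) (at_right 0)"
    by (intro tendsto_intros)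
  moreover have "\<forall>\<^sub>F x in at_right 0.
                   - (of_real (x * ln (exp (2 * pi * x) - 1)) + of_real x * (of_real pi * \<i>))
                     = of_real x * polylog 1 (E (of_real x))"
    using eventually_at_right_real[of 0 "1::real"]
    by (auto elim!: eventually_mono simp: E_of_real Ln_one_minus_of_real_gt_1 algebra_simps)
  ultimately show "((\<lambda>x. of_real x * polylog 1 (E (of_real x))) \<longlongrightarrow> 0) (at_right 0)"
    using Lim_transform_eventually by fastforce
qed

lemma tendsto_H_of_real_0: "((\<lambda>x. H (of_real x)) \<longlongrightarrow> 0) (at (0::real))"
proof -
  have "((\<lambda>x. polylog 3 (E (of_real x))) \<longlongrightarrow> polylog 3 1) (at (0::real))"
       "((\<lambda>x. polylog 2 (E (of_real x))) \<longlongrightarrow> polylog 2 1) (at (0::real))"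
    using tendsto_polylog_E_of_real_0[of 1] tendsto_polylog_E_of_real_0[of 0]
    by (simp_all add: eval_nat_numeral)
  moreover have "((\<lambda>x::real. complex_of_real x) \<longlongrightarrow> 0) (at 0)"
    by (rule tendsto_eq_intros refl)+ simp
  ultimately have "((\<lambda>x. H (of_real x)) \<longlongrightarrow>
      - (0 ^ 2) / 2 - of_real pi * 0 ^ 3 / 6 - of_real pi * 0 / 12 - zeta 3 / (2 * of_real pi ^ 2)
      + polylog 3 1 / (2 * of_real pi ^ 2) - 0 * polylog 2 1 / (2 * of_real pi)) (at (0::real))"
    unfolding H_def by (intro tendsto_intros) auto
  moreover have "polylog 3 1 = zeta 3" using polylog_at_1[of 3] by simp
  ultimately show ?thesis by simp
qed

lemma tendsto_H'_of_real_0: "((\<lambda>x. H' (of_real x)) \<longlongrightarrow> 0) (at (0::real))"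
proof -
  have "((\<lambda>x. polylog 2 (E (of_real x))) \<longlongrightarrow> polylog 2 1) (at (0::real))"
    using tendsto_polylog_E_of_real_0[of 0] by (simp add: eval_nat_numeral)
  moreover have "((\<lambda>x::real. complex_of_real x) \<longlongrightarrow> 0) (at 0)"
    by (rule tendsto_eq_intros refl)+ simp
  ultimately have "((\<lambda>x. H' (of_real x)) \<longlongrightarrow>
      (- 0 - of_real pi * 0 ^ 2 / 2 - of_real pi / 12 + polylog 2 1 / (2 * of_real pi)) - 0)
      (at (0::real))"
    unfolding H'_def
    by (intro tendsto_diff[OF _ tendsto_of_real_times_polylog_1_E_0] tendsto_intros) auto
  moreover have "(- 0 - of_real pi * 0 ^ 2 / 2 - of_real pi / 12 + polylog 2 1 / (2 * of_real pi)) - 0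
                   = (0::complex)"
    by (simp add: polylog_2_at_1 field_simps power2_eq_square)
  ultimately show ?thesis by (simp only:)
qed

lemma tendsto_G_of_real_0: "((\<lambda>x. G (of_real x)) \<longlongrightarrow> 0) (at (0::real))"
  and tendsto_G'_of_real_0: "((\<lambda>x. G' (of_real x)) \<longlongrightarrow> 0) (at (0::real))"
proof -
  have x: "((\<lambda>x::real. complex_of_real x) \<longlongrightarrow> 0) (at 0)"
    by (rule tendsto_eq_intros refl)+ simp
  have "isCont G 0" "isCont G' 0"
    using has_field_derivative_G[of 0] has_field_derivative_G'[of 0] by (auto dest: DERIV_isCont)
  thus "((\<lambda>x. G (of_real x)) \<longlongrightarrow> 0) (at (0::real))" "((\<lambda>x. G' (of_real x)) \<longlongrightarrow> 0) (at (0::real))"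
    using isCont_tendsto_compose[OF _ x] by fastforce+
qed

section \<open>Matching both sides\<close>

lemma has_field_derivative_0_imp_eq_0:
  fixes f :: "complex \<Rightarrow> complex" and \<gamma> :: "'a \<Rightarrow> complex"
  assumes S: "open S" "connected S" and f: "\<And>z. z \<in> S \<Longrightarrow> (f has_field_derivative 0) (at z)"
      and F: "F \<noteq> bot" "\<forall>\<^sub>F x in F. \<gamma> x \<in> S" and lim: "((\<lambda>x. f (\<gamma> x)) \<longlongrightarrow> 0) F"
      and z: "z \<in> S"
  shows "f z = 0"
proof -
  have "continuous_on S f"
    using f by (intro continuous_at_imp_continuous_on) (blast intro: DERIV_isCont)
  then obtain c where c: "\<And>z. z \<in> S \<Longrightarrow> f z = c"
    using DERIV_zero_connected_constant[OF S(2,1), of "{}" f] f by auto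
  have "((\<lambda>x. f (\<gamma> x)) \<longlongrightarrow> c) F"
    using F(2) by (intro tendsto_eventually) (auto elim!: eventually_mono simp: c)
  with lim have "c = 0" using tendsto_unique[OF F(1)] by blast
  thus ?thesis using c[OF z] by simp
qed

lemma has_vector_derivative_0_imp_eq_0:
  fixes f :: "real \<Rightarrow> 'a::real_normed_vector"
  assumes f: "\<And>t. t \<in> {a<..<b} \<Longrightarrow> (f has_vector_derivative 0) (at t)"
      and lim: "(f \<longlongrightarrow> 0) (at_right a)" and t: "t \<in> {a<..<b}"
  shows "f t = 0"
proof -
  obtain c where c: "\<And>t. t \<in> {a<..<b} \<Longrightarrow> f t = c"
    using has_vector_derivative_zero_constant[of "{a<..<b}" f] f
    by (metis convex_real_interval(8) has_vector_derivative_at_within)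
  have "a < b" using t by simp
  hence "(f \<longlongrightarrow> c) (at_right a)"
    by (intro tendsto_eventually) (auto elim!: eventually_mono[OF eventually_at_right_real] simp: c)
  with lim have "c = 0" using tendsto_unique[OF trivial_limit_at_right_real] by blast
  thus ?thesis using c[OF t] by simp
qed

definition slit_disc :: "complex set" where
  "slit_disc = ball 0 1 - {z. Im z = 0 \<and> 0 \<le> Re z}"

lemma open_slit_disc: "open slit_disc"
proof -
  have "closed {z::complex. Im z = 0 \<and> 0 \<le> Re z}"
    by (intro closed_Collect_conj closed_Collect_eq closed_Collect_le continuous_intros)
  thus ?thesis unfolding slit_disc_def by (intro open_Diff open_ball)
qed

lemma connected_slit_disc: "connected slit_disc"
proof (rule starlike_imp_connected)
  show "starlike slit_disc" unfolding starlike_def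
  proof (intro bexI[of _ "-1/2"] ballI subsetI)
    show "-1/2 \<in> slit_disc" by (simp add: slit_disc_def)
    fix p u assume p: "p \<in> slit_disc" and u: "u \<in> closed_segment (-1/2) p"
    have "closed_segment (-1/2) p \<subseteq> ball 0 1"
      by (rule closed_segment_subset) (use p in \<open>auto simp: slit_disc_def\<close>)
    hence "u \<in> ball 0 1" using u by auto
    from u obtain t where t: "0 \<le> t" "t \<le> 1" "u = (1 - t) *\<^sub>R (-1/2) + t *\<^sub>R p"
      by (auto simp: closed_segment_def)
    have Re: "Re u = - (1 - t) / 2 + t * Re p" and Im: "Im u = t * Im p"
      unfolding t(3) by (simp_all add: field_simps)
    have "Re u < 0" if "Im u = 0"
    proof (cases "t = 0")
      case False
      hence "Im p = 0" using that Im by simp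
      hence "Re p < 0" using p by (auto simp: slit_disc_def)
      hence "t * Re p < 0" using False t by (simp add: mult_pos_neg)
      thus ?thesis using Re t by simp
    qed (use Re in simp)
    thus "u \<in> slit_disc" using \<open>u \<in> ball 0 1\<close> by (auto simp: slit_disc_def)
  qed
qed

lemma E_in_slit_plane_if_slit_disc:
  assumes "z \<in> slit_disc"
  shows "E z \<in> slit_plane"
proof (rule ccontr)
  assume "E z \<notin> slit_plane"
  then obtain n :: int where n: "0 \<le> Re z" "Im z = of_int n"
    using E_notin_slit_plane by (auto elim: Ints_cases)
  moreover have "\<bar>Im z\<bar> < 1" using assms abs_Im_le_cmod[of z] by (simp add: slit_disc_def)
  hence "n = 0" using n by simp
  ultimately show False using assms by (simp add: slit_disc_def)
qed

lemma eventually_of_real_in_slit_disc: "\<forall>\<^sub>F x in at_left 0. complex_of_real x \<in> slit_disc"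
  by (rule eventually_mono[OF eventually_at_left_real[of "-1" 0]]) (auto simp: slit_disc_def)

lemma G_eq_H_slit_disc:
  assumes "z \<in> slit_disc"
  shows "G z = H z"
proof -
  have z: "w \<noteq> 0" "norm w < 1" "E w \<in> slit_plane" if "w \<in> slit_disc" for w
    using that E_in_slit_plane_if_slit_disc by (auto simp: slit_disc_def)
  have "G' w - H' w = 0" if "w \<in> slit_disc" for w
  proof (rule has_field_derivative_0_imp_eq_0[OF open_slit_disc connected_slit_disc _
                trivial_limit_at_left_real eventually_of_real_in_slit_disc _ that])
    show "((\<lambda>w. G' w - H' w) has_field_derivative 0) (at w)" if "w \<in> slit_disc" for w
      using DERIV_diff[OF has_field_derivative_G' has_field_derivative_H'] G''_eq_K z[OF that]
      by fastforce
    show "((\<lambda>x. G' (of_real x) - H' (of_real x)) \<longlongrightarrow> 0) (at_left 0)"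
      using tendsto_diff[OF tendsto_G'_of_real_0 tendsto_H'_of_real_0]
      by (simp add: filterlim_at_split)
  qed
  moreover have "((\<lambda>w. G w - H w) has_field_derivative G' w - H' w) (at w)" if "w \<in> slit_disc" for w
    using DERIV_diff[OF has_field_derivative_G has_field_derivative_H] z[OF that] by blast
  ultimately have "G z - H z = 0"
    using tendsto_diff[OF tendsto_G_of_real_0 tendsto_H_of_real_0]
    by (intro has_field_derivative_0_imp_eq_0[OF open_slit_disc connected_slit_disc _
                trivial_limit_at_left_real eventually_of_real_in_slit_disc _ assms])
       (auto simp: filterlim_at_split)
  thus ?thesis by simp
qed

lemma G_eq_H_of_real:
  assumes "0 < x" "x < 1"
  shows "G (of_real x) = H (of_real x)"
proof -
  have t: "norm (complex_of_real t) < 1" "complex_of_real t \<noteq> 0" if "t \<in> {0<..<1}" for t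
    using that by auto
  have "G' (of_real t) - H' (of_real t) = 0" if "t \<in> {0<..<1}" for t
  proof (rule has_vector_derivative_0_imp_eq_0[of 0 1 "\<lambda>t. G' (of_real t) - H' (of_real t)", OF _ _ that])
    show "((\<lambda>t. G' (of_real t) - H' (of_real t)) has_vector_derivative 0) (at t)"
      if "t \<in> {0<..<1}" for t
      using has_vector_derivative_diff[OF has_vector_derivative_real_field[OF has_field_derivative_G']
              has_vector_derivative_H'_of_real] G''_eq_K[OF t(2) t(1)] that
      by fastforce
    show "((\<lambda>t. G' (of_real t) - H' (of_real t)) \<longlongrightarrow> 0) (at_right 0)"
      using tendsto_diff[OF tendsto_G'_of_real_0 tendsto_H'_of_real_0]
      by (simp add: filterlim_at_split)
  qed
  moreover have "((\<lambda>t. G (of_real t) - H (of_real t)) has_vector_derivative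
                   G' (of_real t) - H' (of_real t)) (at t)" if "t \<in> {0<..<1}" for t
    using has_vector_derivative_diff[OF has_vector_derivative_real_field[OF has_field_derivative_G]
            has_vector_derivative_H_of_real] that by auto
  ultimately have "G (of_real x) - H (of_real x) = 0"
    using tendsto_diff[OF tendsto_G_of_real_0 tendsto_H_of_real_0] assms
    by (intro has_vector_derivative_0_imp_eq_0[of 0 1]) (auto simp: filterlim_at_split)
  thus ?thesis by simp
qed

lemma G_eq_H_ball:
  assumes "0 < norm z" "norm z < 1"
  shows "G z = H z"
proof (cases "Im z = 0 \<and> 0 \<le> Re z")
  case True
  hence "z = of_real (Re z)" by (simp add: complex_eq_iff)
  moreover have "0 < Re z" "Re z < 1"
    using True assms \<open>z = of_real (Re z)\<close> by (metis norm_of_real abs_of_nonneg less_eq_real_def)+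
  ultimately show ?thesis using G_eq_H_of_real by metis
next
  case False
  thus ?thesis using assms by (intro G_eq_H_slit_disc) (simp add: slit_disc_def)
qed

lemma sphere_E_notin_slit_plane:
  assumes "norm z = 1" "E z \<notin> slit_plane"
  shows "z = 1 \<or> Re z = 0"
proof -
  obtain m :: int where m: "0 \<le> Re z" "Im z = of_int m"
    using E_notin_slit_plane[OF assms(2)] by (auto elim: Ints_cases)
  show ?thesis
  proof (cases "m = 0")
    case True
    hence "z = of_real (Re z)" using m by (simp add: complex_eq_iff)
    thus ?thesis using assms(1) m(1) by (metis abs_of_nonneg norm_of_real of_real_1)
  next
    case False
    hence "1 \<le> \<bar>Im z\<bar>" using m(2) by linarith
    hence "1 \<le> Im z ^ 2" by (metis abs_ge_zero abs_le_square_iff abs_one power_one)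
    moreover have "Re z ^ 2 + Im z ^ 2 = 1" using assms(1) by (simp add: cmod_power2[symmetric])
    ultimately have "Re z ^ 2 = 0" using zero_le_power2[of "Re z"] by linarith
    thus ?thesis by simp
  qed
qed

lemma tendsto_polylog_E_radial:
  assumes "norm z = 1"
  shows "((\<lambda>r. polylog (Suc (Suc n)) (E (of_real r * z))) \<longlongrightarrow> polylog (Suc (Suc n)) (E z))
           (at_left 1)"
proof -
  have radius: "((\<lambda>r::real. of_real r * z) \<longlongrightarrow> z) (at_left 1)"
    by (rule tendsto_eq_intros refl)+ simp
  have lim_E: "((\<lambda>r::real. E (of_real r * z)) \<longlongrightarrow> E z) (at_left 1)"
    by (rule isCont_tendsto_compose[OF DERIV_isCont[OF has_field_derivative_E] radius])
  consider "E z \<in> slit_plane" | "z = 1" | "E z \<notin> slit_plane" "z \<noteq> 1" by blast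
  thus ?thesis
  proof cases
    case 1
    thus ?thesis by (rule isCont_tendsto_compose[OF isCont_polylog lim_E])
  next
    case 2
    have "((\<lambda>r::real. exp (2 * pi * r)) \<longlongrightarrow> exp (2 * pi)) (at_left 1)"
      by (rule tendsto_eq_intros refl)+ simp
    moreover have "\<forall>\<^sub>F r in at_left 1. exp (2 * pi * r) \<in> {0..exp (2 * pi)}"
    proof (rule eventually_mono[OF eventually_at_left_real[of 0 "1::real"]])
      fix r :: real assume "r \<in> {0<..<1}"
      hence "2 * pi * r \<le> 2 * pi * 1" using pi_gt_zero by (intro mult_left_mono) auto
      thus "exp (2 * pi * r) \<in> {0..exp (2 * pi)}" by simp
    qed simp
    ultimately have "((\<lambda>r. polylog (Suc (Suc n)) (of_real (exp (2 * pi * r)))) \<longlongrightarrow>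
                        polylog (Suc (Suc n)) (of_real (exp (2 * pi)))) (at_left 1)"
      by (intro continuous_on_tendsto_compose[OF continuous_on_polylog_of_real]) auto
    thus ?thesis using 2 by (simp add: E_of_real[of 1, simplified] E_of_real)
  next
    case 3
    hence "Re z = 0" using sphere_E_notin_slit_plane[OF assms] by blast
    hence circle: "E (of_real r * z) \<in> cball 0 1" for r by (simp add: E_def norm_exp_eq_Re)
    show ?thesis
      using circle circle[of 1]
      by (intro continuous_on_tendsto_compose[OF continuous_on_polylog_cball lim_E]) auto
  qed
qed

lemma tendsto_H_radial:
  assumes "norm z = 1"
  shows "((\<lambda>r. H (of_real r * z)) \<longlongrightarrow> H z) (at_left 1)"
proof -
  have "((\<lambda>r. polylog 3 (E (of_real r * z))) \<longlongrightarrow> polylog 3 (E z)) (at_left 1)"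
       "((\<lambda>r. polylog 2 (E (of_real r * z))) \<longlongrightarrow> polylog 2 (E z)) (at_left 1)"
    using tendsto_polylog_E_radial[OF assms, of 1] tendsto_polylog_E_radial[OF assms, of 0]
    by (simp_all add: eval_nat_numeral)
  moreover have "((\<lambda>r::real. of_real r * z) \<longlongrightarrow> z) (at_left 1)"
    by (rule tendsto_eq_intros refl)+ simp
  ultimately show ?thesis unfolding H_def by (intro tendsto_intros) auto
qed

lemma G_eq_H_sphere:
  assumes "norm z = 1"
  shows "G z = H z"
proof -
  have inside: "\<forall>\<^sub>F r in at_left 1. 0 < norm (of_real r * z) \<and> norm (of_real r * z) < (1::real)"
    by (rule eventually_mono[OF eventually_at_left_real[of 0 1]]) (auto simp: norm_mult assms)
  have "((\<lambda>r. G (of_real r * z)) \<longlongrightarrow> G z) (at_left 1)"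
    by (rule continuous_on_tendsto_compose[OF continuous_on_G])
       (use assms inside in \<open>auto elim!: eventually_mono intro!: tendsto_eq_intros\<close>)
  moreover have "\<forall>\<^sub>F r in at_left 1. G (of_real r * z) = H (of_real r * z)"
    using inside by (auto elim!: eventually_mono intro: G_eq_H_ball)
  ultimately have "((\<lambda>r. H (of_real r * z)) \<longlongrightarrow> G z) (at_left 1)"
    by (rule Lim_transform_eventually)
  thus ?thesis by (rule tendsto_unique[OF trivial_limit_at_left_real _ tendsto_H_radial[OF assms]])
qed

theorem theorem14:
  fixes z :: complex
  assumes "0 < norm z" and "norm z \<le> 1"
  shows "(\<lambda>j::nat. (-1) ^ j * zeta (of_nat (2 * Suc j)) * z ^ (2 * Suc j)
            / (of_nat (2 * Suc j + 1) * of_nat (Suc j + 1)))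
         sums (- 1/2 - of_real pi * z / 6 - of_real pi / (12 * z)
               - zeta 3 / (2 * of_real pi ^ 2 * z ^ 2)
               + polylog 3 (exp (2 * of_real pi * z)) / (2 * of_real pi ^ 2 * z ^ 2)
               - polylog 2 (exp (2 * of_real pi * z)) / (2 * of_real pi * z))"
proof -
  have "z \<noteq> 0" using assms(1) by auto
  have "G z = H z"
    using assms G_eq_H_ball G_eq_H_sphere by (cases "norm z < 1") auto
  moreover have "H z / z ^ 2 = - 1/2 - of_real pi * z / 6 - of_real pi / (12 * z)
               - zeta 3 / (2 * of_real pi ^ 2 * z ^ 2)
               + polylog 3 (exp (2 * of_real pi * z)) / (2 * of_real pi ^ 2 * z ^ 2)
               - polylog 2 (exp (2 * of_real pi * z)) / (2 * of_real pi * z)"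
    using \<open>z \<noteq> 0\<close> by (simp add: H_def E_def field_simps power2_eq_square power3_eq_cube)
  ultimately show ?thesis
    using sums_G_divide_square[OF \<open>z \<noteq> 0\<close> assms(2)] by simp
qed

end
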